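(* Let $K\subseteq\mathbb R^n$ ($n\ge1$) be a semialgebraic set with nonempty interior and let $d>2$ be even. Then there is no polynomial $\varphi$ in the coefficients of $f\in\mathbb R[x]_{\le d}$ with $\varphi(f)>0$ for all $f\in\operatorname{int}P_d(K)$ and $\varphi(f)=0$ for all $f\in\partial P_d(K)$. Consequently $-\log\varphi(f)$ cannot be a barrier for $P_d(K)$ with $\varphi$ polynomial, and $P_d(K)$ is not representable by a linear matrix inequality (no affine-linear symmetric matrix pencil $L(f)$ in the coefficients of $f$ with $P_d(K)=\{f:L(f)\succeq0\}$ and $L(f)\succ0$ on $\operatorname{int}P_d(K)$).
   Context: $\mathbb R[x]_{\le d}$: real polynomials in $x=(x_1,\dots,x_n)$ of degree $\le d$, with Euclidean topology on coefficients; $P_d(K)=\{f\in\mathbb R[x]_{\le d}: f(x)\ge0\ \forall x\in K\}$. *)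

theory Defs
  imports "HOL-Analysis.Analysis"
begin

inductive poly_fun :: "(('i \<Rightarrow> real) \<Rightarrow> real) \<Rightarrow> bool" where
  pf_const: "poly_fun (\<lambda>x. c)"
| pf_var:   "poly_fun (\<lambda>x. x i)"
| pf_add:   "poly_fun p \<Longrightarrow> poly_fun q \<Longrightarrow> poly_fun (\<lambda>x. p x + q x)"
| pf_mult:  "poly_fun p \<Longrightarrow> poly_fun q \<Longrightarrow> poly_fun (\<lambda>x. p x * q x)"

inductive semialgebraic :: "('i \<Rightarrow> real) set \<Rightarrow> bool" where
  sa_basic: "poly_fun p \<Longrightarrow> semialgebraic {x. 0 < p x}"
| sa_compl: "semialgebraic S \<Longrightarrow> semialgebraic (- S)"
| sa_union: "semialgebraic S \<Longrightarrow> semialgebraic T \<Longrightarrow> semialgebraic (S \<union> T)"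
| sa_inter: "semialgebraic S \<Longrightarrow> semialgebraic T \<Longrightarrow> semialgebraic (S \<inter> T)"

definition mons_le :: "nat \<Rightarrow> ('n::finite \<Rightarrow> nat) set" where
  "mons_le d = {\<alpha>. (\<Sum>i\<in>UNIV. \<alpha> i) \<le> d}"

text \<open>The coefficient space R[x]_{<= d}: coefficient functions supported on mons_le d.\<close>
definition polyspace :: "nat \<Rightarrow> (('n::finite \<Rightarrow> nat) \<Rightarrow> real) set" where
  "polyspace d = {c. \<forall>\<alpha>. \<alpha> \<notin> mons_le d \<longrightarrow> c \<alpha> = 0}"

definition peval :: "nat \<Rightarrow> (('n::finite \<Rightarrow> nat) \<Rightarrow> real) \<Rightarrow> ('n \<Rightarrow> real) \<Rightarrow> real" where
  "peval d c x = (\<Sum>\<alpha>\<in>mons_le d. c \<alpha> * (\<Prod>i\<in>UNIV. x i ^ \<alpha> i))"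

definition Pd :: "nat \<Rightarrow> ('n::finite \<Rightarrow> real) set \<Rightarrow> (('n \<Rightarrow> nat) \<Rightarrow> real) set" where
  "Pd d K = {c \<in> polyspace d. \<forall>x\<in>K. 0 \<le> peval d c x}"

definition intPd :: "nat \<Rightarrow> ('n::finite \<Rightarrow> real) set \<Rightarrow> (('n \<Rightarrow> nat) \<Rightarrow> real) set" where
  "intPd d K = (top_of_set (polyspace d)) interior_of (Pd d K)"

definition bdPd :: "nat \<Rightarrow> ('n::finite \<Rightarrow> real) set \<Rightarrow> (('n \<Rightarrow> nat) \<Rightarrow> real) set" where
  "bdPd d K = (top_of_set (polyspace d)) frontier_of (Pd d K)"

definition psd_mat :: "real^'m^'m \<Rightarrow> bool" where
  "psd_mat A \<longleftrightarrow> (\<forall>v. 0 \<le> v \<bullet> (A *v v))"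

definition pd_mat :: "real^'m^'m \<Rightarrow> bool" where
  "pd_mat A \<longleftrightarrow> (\<forall>v. v \<noteq> 0 \<longrightarrow> 0 < v \<bullet> (A *v v))"

end

theory Submission
  imports Defs "HOL-Computational_Algebra.Polynomial"
begin

text \<open>
  Fix a point p in the interior of K and write S(x) = |x - p|^2, D = d/2.
  The polynomials  c_t = (S - t)^2 (1 + S)^(D-2)  (of degree d, since d \<ge> 4) form a curve
  in the coefficient space R[x]_{\<le>d} whose coefficients depend polynomially on t.
  Every c_t is nonnegative everywhere, and for small t > 0 it vanishes at a point of K
  (a point of the sphere S = t lying in K), so c_t lies on the boundary of P_d(K);
  on the other hand c_{-1} = (1 + S)^D is in the interior of P_d(K).
  Any polynomial \<phi> on the coefficient space that vanishes on the boundary therefore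
  vanishes at infinitely many parameters t of the curve, hence identically along it,
  in particular at the interior point c_{-1}.
  A polynomial barrier must vanish on the boundary (continuity plus -log \<phi> \<rightarrow> \<infinity>),
  and for an LMI description the determinant of the pencil would be such a \<phi>
  (singular on the boundary, nonzero on the interior).
\<close>

section \<open>Univariate polynomial functions and polynomial curves\<close>

definition ispoly :: "(real \<Rightarrow> real) \<Rightarrow> bool" where
  "ispoly g \<longleftrightarrow> (\<exists>P. \<forall>t. g t = poly P t)"

lemma ispoly_const [intro]: "ispoly (\<lambda>t. c)"
  unfolding ispoly_def by (rule exI[of _ "[:c:]"]) simp

lemma ispoly_id [intro]: "ispoly (\<lambda>t. t)"
  unfolding ispoly_def by (rule exI[of _ "[:0, 1:]"]) simp

lemma ispoly_add [intro]: "ispoly f \<Longrightarrow> ispoly g \<Longrightarrow> ispoly (\<lambda>t. f t + g t)"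
  unfolding ispoly_def by (metis poly_add)

lemma ispoly_mult [intro]: "ispoly f \<Longrightarrow> ispoly g \<Longrightarrow> ispoly (\<lambda>t. f t * g t)"
  unfolding ispoly_def by (metis poly_mult)

lemma ispoly_sum [intro]:
  "(\<And>a. a \<in> A \<Longrightarrow> ispoly (f a)) \<Longrightarrow> ispoly (\<lambda>t. \<Sum>a\<in>A. f a t)"
  by (induction A rule: infinite_finite_induct) auto

lemma ispoly_prod [intro]:
  "(\<And>a. a \<in> A \<Longrightarrow> ispoly (f a)) \<Longrightarrow> ispoly (\<lambda>t. \<Prod>a\<in>A. f a t)"
  by (induction A rule: infinite_finite_induct) auto

lemma ispoly_zero_on_infinite:
  assumes "ispoly g" "infinite Z" "\<And>t. t \<in> Z \<Longrightarrow> g t = 0"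
  shows "g t = 0"
proof -
  obtain P where P: "\<And>t. g t = poly P t" using assms(1) unfolding ispoly_def by blast
  have "Z \<subseteq> {t. poly P t = 0}" using assms(3) P by auto
  then have "infinite {t. poly P t = 0}" using assms(2) finite_subset by blast
  then have "P = 0" using poly_roots_finite by blast
  then show ?thesis using P by simp
qed

definition poly_curve :: "(real \<Rightarrow> 'a \<Rightarrow> real) \<Rightarrow> bool" where
  "poly_curve c \<longleftrightarrow> (\<forall>\<alpha>. ispoly (\<lambda>t. c t \<alpha>))"

lemma poly_fun_along_curve:
  assumes "poly_fun \<phi>" "poly_curve c"
  shows "ispoly (\<lambda>t. \<phi> (c t))"
  using assms(1) by induction (use assms(2) in \<open>auto simp: poly_curve_def\<close>)

lemma ispoly_det:
  fixes M :: "real \<Rightarrow> real^'m::finite^'m"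
  assumes "\<And>i j. ispoly (\<lambda>t. M t $ i $ j)"
  shows "ispoly (\<lambda>t. det (M t))"
  unfolding det_def using assms by (intro ispoly_sum ispoly_mult ispoly_prod ispoly_const) auto

lemma poly_fun_continuous: "poly_fun \<phi> \<Longrightarrow> continuous_on UNIV \<phi>"
  by (induction rule: poly_fun.induct) (auto intro!: continuous_intros continuous_on_product_coordinates)


section \<open>Polynomial functions of degree at most d in coefficient form\<close>

definition mon :: "('n::finite \<Rightarrow> nat) \<Rightarrow> ('n \<Rightarrow> real) \<Rightarrow> real" where
  "mon \<alpha> x = (\<Prod>i\<in>UNIV. x i ^ \<alpha> i)"

lemma peval_mon: "peval d c x = (\<Sum>\<alpha>\<in>mons_le d. c \<alpha> * mon \<alpha> x)"
  unfolding peval_def mon_def ..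

lemma mon_add: "mon (\<lambda>i. \<alpha> i + \<beta> i) x = mon \<alpha> x * mon \<beta> x"
  unfolding mon_def by (simp add: power_add prod.distrib)

lemma finite_mons [simp]: "finite (mons_le d :: ('n::finite \<Rightarrow> nat) set)"
proof -
  have "mons_le d \<subseteq> PiE UNIV (\<lambda>_::'n. {..d})"
  proof
    fix \<alpha> :: "'n \<Rightarrow> nat" assume "\<alpha> \<in> mons_le d"
    moreover have "\<alpha> i \<le> (\<Sum>i\<in>UNIV. \<alpha> i)" for i by (rule member_le_sum) auto
    ultimately show "\<alpha> \<in> PiE UNIV (\<lambda>_::'n. {..d})"
      by (auto simp: PiE_iff mons_le_def intro: le_trans)
  qed
  then show ?thesis by (rule finite_subset) (simp add: finite_PiE)
qed

lemma zero_mons [simp]: "(\<lambda>_. 0) \<in> mons_le d"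
  by (simp add: mons_le_def)

lemma mons_add: "\<alpha> \<in> mons_le d1 \<Longrightarrow> \<beta> \<in> mons_le d2 \<Longrightarrow> (\<lambda>i. \<alpha> i + \<beta> i) \<in> mons_le (d1 + d2)"
  by (simp add: mons_le_def sum.distrib add_mono)

lemma mons_mono: "d \<le> d' \<Longrightarrow> mons_le d \<subseteq> mons_le d'"
  by (auto simp: mons_le_def)

lemma sum_single_term:
  assumes "finite A" "a \<in> A" "\<And>b. b \<in> A \<Longrightarrow> b \<noteq> a \<Longrightarrow> f b = 0"
  shows "sum f A = f a"
proof -
  have "sum f A = f a + sum f (A - {a})" using assms(1,2) by (simp add: sum.remove)
  also have "sum f (A - {a}) = 0" using assms(3) by (intro sum.neutral) auto
  finally show ?thesis by simp
qed

lemma peval_lincomb: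
  "peval d (\<lambda>\<alpha>. a * f \<alpha> + b * g \<alpha>) x = a * peval d f x + b * peval d g x"
  unfolding peval_mon by (simp add: sum.distrib sum_distrib_left algebra_simps)

definition representable :: "nat \<Rightarrow> (('n::finite \<Rightarrow> real) \<Rightarrow> real) \<Rightarrow> bool" where
  "representable d F \<longleftrightarrow> (\<exists>c\<in>polyspace d. \<forall>x. peval d c x = F x)"

lemma representable_mono:
  assumes "representable d F" "d \<le> d'" shows "representable d' F"
proof -
  obtain c where c: "c \<in> polyspace d" "\<And>x. peval d c x = F x"
    using assms(1) unfolding representable_def by blast
  have "c \<in> polyspace d'" using c(1) mons_mono[OF assms(2)] by (auto simp: polyspace_def)
  moreover have "peval d' c x = peval d c x" for x
    using c(1) mons_mono[OF assms(2)]
    unfolding peval_mon polyspace_def by (intro sum.mono_neutral_right) auto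
  ultimately show ?thesis using c(2) unfolding representable_def by auto
qed

lemma representable_const: "representable d (\<lambda>x. a)"
  unfolding representable_def
proof (intro bexI allI)
  let ?c = "\<lambda>\<alpha>. if \<alpha> = (\<lambda>_. 0) then a else 0"
  show "?c \<in> polyspace d" by (simp add: polyspace_def)
  show "peval d ?c x = a" for x
    unfolding peval_mon by (subst sum_single_term[where a="\<lambda>_. 0"]) (auto simp: mon_def)
qed

lemma representable_var: "1 \<le> d \<Longrightarrow> representable d (\<lambda>x. x i)"
  unfolding representable_def
proof (intro bexI allI)
  assume "1 \<le> d"
  let ?e = "\<lambda>j. if j = i then 1 else (0::nat)"
  let ?c = "\<lambda>\<alpha>. if \<alpha> = ?e then 1 else (0::real)"
  have e: "?e \<in> mons_le d" using \<open>1 \<le> d\<close> by (simp add: mons_le_def)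
  then show "?c \<in> polyspace d" by (auto simp: polyspace_def)
  have "mon ?e x = x i" for x
    unfolding mon_def by (subst prod.remove[of _ i]) (auto intro!: prod.neutral)
  then show "peval d ?c x = x i" for x
    using e unfolding peval_mon by (subst sum_single_term[where a="?e"]) auto
qed

lemma representable_add:
  assumes "representable d F" "representable d G"
  shows "representable d (\<lambda>x. F x + G x)"
proof -
  obtain c e where "c \<in> polyspace d" "\<And>x. peval d c x = F x"
    "e \<in> polyspace d" "\<And>x. peval d e x = G x"
    using assms unfolding representable_def by blast
  then show ?thesis unfolding representable_def
    using peval_lincomb[of d 1 c 1 e]
    by (intro bexI[of _ "\<lambda>\<alpha>. c \<alpha> + e \<alpha>"]) (auto simp: polyspace_def)
qed

lemma representable_mult:
  assumes "representable d1 F" "representable d2 G"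
  shows "representable (d1 + d2) (\<lambda>x. F x * G x)"
proof -
  obtain c e where c: "c \<in> polyspace d1" "\<And>x. peval d1 c x = F x"
    and e: "e \<in> polyspace d2" "\<And>x. peval d2 e x = G x"
    using assms unfolding representable_def by blast
  define h where "h \<gamma> = (\<Sum>\<alpha>\<in>mons_le d1. \<Sum>\<beta>\<in>mons_le d2.
      if (\<lambda>i. \<alpha> i + \<beta> i) = \<gamma> then c \<alpha> * e \<beta> else 0)" for \<gamma>
  have "h \<in> polyspace (d1 + d2)"
    unfolding h_def polyspace_def by (auto intro!: sum.neutral) (use mons_add in blast)
  moreover have "peval (d1 + d2) h x = F x * G x" for x
  proof -
    have "peval (d1 + d2) h x = (\<Sum>\<alpha>\<in>mons_le d1. \<Sum>\<beta>\<in>mons_le d2. \<Sum>\<gamma>\<in>mons_le (d1 + d2).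
          if (\<lambda>i. \<alpha> i + \<beta> i) = \<gamma> then c \<alpha> * e \<beta> * mon \<gamma> x else 0)"
      unfolding peval_mon h_def sum_distrib_right
      by (subst sum.swap, subst (2) sum.swap) (auto intro!: sum.cong)
    also have "\<dots> = (\<Sum>\<alpha>\<in>mons_le d1. \<Sum>\<beta>\<in>mons_le d2. c \<alpha> * e \<beta> * mon (\<lambda>i. \<alpha> i + \<beta> i) x)"
      by (intro sum.cong refl, subst sum_single_term[where a="\<lambda>i. _ i + _ i"])
         (auto intro: mons_add)
    also have "\<dots> = F x * G x"
      unfolding c(2)[symmetric] e(2)[symmetric] peval_mon
      by (simp add: mon_add sum_product mult_ac)
    finally show ?thesis .
  qed
  ultimately show ?thesis unfolding representable_def by blast
qed

lemma representable_sum: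
  assumes "\<And>i. i \<in> I \<Longrightarrow> representable d (F i)"
  shows "representable d (\<lambda>x. \<Sum>i\<in>I. F i x)"
  using assms
proof (induction I rule: infinite_finite_induct)
  case (insert a I) then show ?case by (simp add: representable_add)
qed (auto intro: representable_const)

lemma representable_power:
  assumes "representable d F" shows "representable (d * k) (\<lambda>x. F x ^ k)"
proof (induction k)
  case 0 then show ?case using representable_const[of 0 1] by simp
next
  case (Suc k) then show ?case using representable_mult[OF assms Suc.IH] by (simp add: algebra_simps)
qed


section \<open>Interior and boundary points of P_d(K)\<close>

lemma open_contains_segment:
  fixes U :: "('a \<Rightarrow> real) set"
  assumes "open U" "c \<in> U"
  obtains \<epsilon> where "\<epsilon> > 0" "\<And>s. \<bar>s\<bar> < \<epsilon> \<Longrightarrow> (\<lambda>\<alpha>. c \<alpha> + s * e \<alpha>) \<in> U"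
proof -
  define h where "h s = (\<lambda>\<alpha>. c \<alpha> + s * e \<alpha>)" for s :: real
  have "continuous_on UNIV h"
    unfolding h_def by (intro continuous_on_coordinatewise_then_product continuous_intros)
  then have "open (h -` U)" using assms(1) continuous_on_open_vimage[of UNIV h] by auto
  moreover have "0 \<in> h -` U" using assms(2) by (simp add: h_def)
  ultimately obtain \<epsilon> where \<epsilon>: "\<epsilon> > 0" "ball 0 \<epsilon> \<subseteq> h -` U"
    using open_contains_ball by blast
  show ?thesis
  proof (rule that[OF \<epsilon>(1)])
    fix s :: real assume "\<bar>s\<bar> < \<epsilon>"
    then have "s \<in> ball 0 \<epsilon>" by (simp add: dist_real_def)
    then show "(\<lambda>\<alpha>. c \<alpha> + s * e \<alpha>) \<in> U" using \<epsilon>(2) by (auto simp: h_def)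
  qed
qed

lemma intPd_crit:
  fixes c :: "('n::finite \<Rightarrow> nat) \<Rightarrow> real"
  assumes "c \<in> polyspace d" "\<epsilon> > 0"
    and "\<And>g. g \<in> polyspace d \<Longrightarrow> (\<forall>\<alpha>\<in>mons_le d. \<bar>g \<alpha> - c \<alpha>\<bar> < \<epsilon>) \<Longrightarrow> g \<in> Pd d K"
  shows "c \<in> intPd d K"
proof -
  define T where "T = {g::('n\<Rightarrow>nat)\<Rightarrow>real. \<forall>\<alpha>\<in>mons_le d. g (id \<alpha>) \<in> {y. \<bar>y - c \<alpha>\<bar> < \<epsilon>}}"
  have "open T" unfolding T_def
  proof (rule product_topology_basis')
    show "open {y. \<bar>y - c \<alpha>\<bar> < \<epsilon>}" for \<alpha>
      using open_ball[of "c \<alpha>" \<epsilon>] by (simp add: ball_def dist_real_def abs_minus_commute)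
  qed simp
  then have "openin (top_of_set (polyspace d)) (polyspace d \<inter> T)" by auto
  moreover have "c \<in> polyspace d \<inter> T" using assms(1,2) by (auto simp: T_def)
  moreover have "polyspace d \<inter> T \<subseteq> Pd d K" using assms(3) by (auto simp: T_def)
  ultimately show ?thesis unfolding intPd_def interior_of_def by blast
qed

definition sqdist :: "('n::finite \<Rightarrow> real) \<Rightarrow> ('n \<Rightarrow> real) \<Rightarrow> real" where
  "sqdist p x = (\<Sum>i\<in>UNIV. (x i - p i)^2)"

lemma sqdist_nonneg: "0 \<le> sqdist p x"
  unfolding sqdist_def by (intro sum_nonneg) auto

text \<open>Each coordinate satisfies x_i^2 \<le> B (1 + S(x)), hence every monomial of degree at
  most 2D is bounded by (B (1 + S(x)))^D.\<close>
lemma coord_bound: "(x i)^2 \<le> 2 * (1 + (\<Sum>j\<in>UNIV. (p j)^2)) * (1 + sqdist p x)"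
proof -
  have a: "(x i - p i)^2 \<le> sqdist p x" unfolding sqdist_def by (rule member_le_sum) auto
  have b: "(p i)^2 \<le> (\<Sum>j\<in>UNIV. (p j)^2)" by (rule member_le_sum) auto
  have "(x i)^2 + (x i - 2 * p i)^2 = 2 * (x i - p i)^2 + 2 * (p i)^2"
    by (simp add: power2_eq_square algebra_simps)
  then have c: "(x i)^2 \<le> 2 * (x i - p i)^2 + 2 * (p i)^2"
    using zero_le_power2[of "x i - 2 * p i"] by linarith
  have "0 \<le> (\<Sum>j\<in>UNIV. (p j)^2) * sqdist p x"
    using sqdist_nonneg by (intro mult_nonneg_nonneg sum_nonneg) auto
  then show ?thesis using a b c by (simp add: algebra_simps)
qed

lemma mon_bound:
  assumes "\<alpha> \<in> mons_le (2 * D)"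
  shows "\<bar>mon \<alpha> x\<bar> \<le> (2 * (1 + (\<Sum>j\<in>UNIV. (p j)^2))) ^ D * (1 + sqdist p x) ^ D"
proof -
  define B where "B = 2 * (1 + (\<Sum>j\<in>UNIV. (p j)^2))"
  let ?W = "B * (1 + sqdist p x)"
  have B: "2 \<le> B" unfolding B_def using sum_nonneg[of UNIV "\<lambda>j. (p j)^2"] by auto
  have "2 * 1 \<le> ?W" using B sqdist_nonneg[of p x] by (intro mult_mono) auto
  then have W1: "1 \<le> ?W" by simp
  have "(mon \<alpha> x)^2 = (\<Prod>i\<in>UNIV. ((x i)^2) ^ \<alpha> i)"
    unfolding mon_def prod_power_distrib by (rule prod.cong) (simp_all, metis power_mult mult.commute)
  also have "\<dots> \<le> (\<Prod>i\<in>UNIV. ?W ^ \<alpha> i)"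
    unfolding B_def by (intro prod_mono conjI power_mono coord_bound) auto
  also have "\<dots> = ?W ^ (\<Sum>i\<in>UNIV. \<alpha> i)" by (simp add: power_sum)
  also have "\<dots> \<le> ?W ^ (2 * D)" using assms W1 by (intro power_increasing) (auto simp: mons_le_def)
  also have "\<dots> = (B ^ D * (1 + sqdist p x) ^ D)^2"
    by (simp add: power_mult power_mult_distrib mult.commute)
  finally show ?thesis
    using abs_le_square_iff[of "mon \<alpha> x" "B ^ D * (1 + sqdist p x) ^ D"] B sqdist_nonneg[of p x]
    by (simp add: abs_of_nonneg B_def)
qed

lemma peval_perturbation:
  fixes c g :: "('n::finite \<Rightarrow> nat) \<Rightarrow> real"
  assumes "\<forall>\<alpha>\<in>mons_le (2 * D). \<bar>g \<alpha> - c \<alpha>\<bar> \<le> \<epsilon>"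
  shows "\<bar>peval (2 * D) g x - peval (2 * D) c x\<bar> \<le>
    \<epsilon> * (real (card (mons_le (2 * D) :: ('n \<Rightarrow> nat) set)) *
    (2 * (1 + (\<Sum>j\<in>UNIV. (p j)^2))) ^ D) * (1 + sqdist p x) ^ D"
proof -
  let ?B = "(2 * (1 + (\<Sum>j\<in>UNIV. (p j)^2))) ^ D * (1 + sqdist p x) ^ D"
  have "\<bar>peval (2 * D) g x - peval (2 * D) c x\<bar> = \<bar>\<Sum>\<alpha>\<in>mons_le (2 * D). (g \<alpha> - c \<alpha>) * mon \<alpha> x\<bar>"
    unfolding peval_mon by (simp add: sum_subtractf left_diff_distrib)
  also have "\<dots> \<le> (\<Sum>\<alpha>\<in>mons_le (2 * D). \<bar>g \<alpha> - c \<alpha>\<bar> * \<bar>mon \<alpha> x\<bar>)"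
    unfolding abs_mult[symmetric] by (rule sum_abs)
  also have "\<dots> \<le> (\<Sum>\<alpha>\<in>(mons_le (2 * D) :: ('n \<Rightarrow> nat) set). \<epsilon> * ?B)"
    using assms mon_bound by (intro sum_mono mult_mono) auto
  finally show ?thesis by (simp add: mult_ac)
qed

text \<open>Coercivity criterion: a polynomial of even degree d bounded below by
  m (1 + |x - p|^2)^(d/2) with m > 0 is an interior point of P_d(K), since by the
  perturbation bound all nearby coefficient vectors stay nonnegative.\<close>
lemma intPd_growth:
  fixes c :: "('n::finite \<Rightarrow> nat) \<Rightarrow> real"
  assumes "even d" "c \<in> polyspace d" "m > 0"
    and "\<And>x. m * (1 + sqdist p x) ^ (d div 2) \<le> peval d c x"
  shows "c \<in> intPd d K"
proof -
  define D where "D = d div 2"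
  have dD: "d = 2 * D" using assms(1) by (simp add: D_def)
  define NB where "NB = real (card (mons_le d :: ('n \<Rightarrow> nat) set)) * (2 * (1 + (\<Sum>j\<in>UNIV. (p j)^2))) ^ D"
  have NB: "0 \<le> NB" by (simp add: NB_def sum_nonneg)
  define \<epsilon> where "\<epsilon> = m / (NB + 1)"
  have \<epsilon>: "\<epsilon> > 0" "\<epsilon> * NB \<le> m" using assms(3) NB by (simp_all add: \<epsilon>_def divide_le_eq)
  show ?thesis
  proof (rule intPd_crit[OF assms(2) \<epsilon>(1)])
    fix g assume g: "g \<in> polyspace d" "\<forall>\<alpha>\<in>mons_le d. \<bar>g \<alpha> - c \<alpha>\<bar> < \<epsilon>"
    have "0 \<le> peval d g x" for x
    proof -
      have "\<forall>\<alpha>\<in>mons_le (2 * D). \<bar>g \<alpha> - c \<alpha>\<bar> \<le> \<epsilon>" using g(2) dD by (simp add: less_imp_le)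
      then have "\<bar>peval d g x - peval d c x\<bar> \<le> \<epsilon> * NB * (1 + sqdist p x) ^ D"
        unfolding dD NB_def by (rule peval_perturbation)
      also have "\<dots> \<le> m * (1 + sqdist p x) ^ D"
        using \<epsilon>(2) sqdist_nonneg[of p x] by (intro mult_right_mono) auto
      also have "\<dots> \<le> peval d c x" using assms(4) by (simp add: D_def)
      finally show ?thesis by linarith
    qed
    then show "g \<in> Pd d K" using g(1) by (simp add: Pd_def)
  qed
qed

text \<open>A nonnegative polynomial with a zero in K is a boundary point of P_d(K): lowering
  its constant term by any s > 0 leaves P_d(K).\<close>
lemma bdPd_crit:
  fixes c :: "('n::finite \<Rightarrow> nat) \<Rightarrow> real"
  assumes "c \<in> Pd d K" "z \<in> K" "peval d c z = 0"
  shows "c \<in> bdPd d K"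
proof -
  have sub: "Pd d K \<subseteq> polyspace d" by (auto simp: Pd_def)
  define one :: "('n \<Rightarrow> nat) \<Rightarrow> real" where "one = (\<lambda>\<alpha>. if \<alpha> = (\<lambda>_. 0) then 1 else 0)"
  have one: "one \<in> polyspace d" "peval d one x = 1" for x
    unfolding one_def peval_mon polyspace_def
    by (auto, subst sum_single_term[where a="\<lambda>_. 0"]) (auto simp: mon_def)
  have "c \<notin> top_of_set (polyspace d) interior_of Pd d K"
  proof
    assume "c \<in> top_of_set (polyspace d) interior_of Pd d K"
    then obtain T where T: "open T" "c \<in> T" "polyspace d \<inter> T \<subseteq> Pd d K"
      unfolding interior_of_def openin_open by blast
    obtain \<epsilon> where \<epsilon>: "\<epsilon> > 0" "\<And>s. \<bar>s\<bar> < \<epsilon> \<Longrightarrow> (\<lambda>\<alpha>. c \<alpha> + s * one \<alpha>) \<in> T"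
      using open_contains_segment[OF T(1,2)] by blast
    then have "(\<lambda>\<alpha>. c \<alpha> + (- \<epsilon> / 2) * one \<alpha>) \<in> T" by (intro \<epsilon>(2)) simp
    moreover have "(\<lambda>\<alpha>. c \<alpha> + (- \<epsilon> / 2) * one \<alpha>) \<in> polyspace d"
      using one(1) assms(1) by (auto simp: Pd_def polyspace_def)
    ultimately have "0 \<le> peval d (\<lambda>\<alpha>. 1 * c \<alpha> + (- \<epsilon> / 2) * one \<alpha>) z"
      using T(3) assms(2) by (auto simp: Pd_def)
    then show False using \<epsilon>(1) assms(3) by (simp only: peval_lincomb one(2))
  qed
  moreover have "c \<in> top_of_set (polyspace d) closure_of Pd d K"
    using closure_of_subset[of "Pd d K" "top_of_set (polyspace d)"] sub assms(1) by auto
  ultimately show ?thesis unfolding bdPd_def frontier_of_def by blast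
qed


text \<open>Every globally nonnegative polynomial of degree at most d is a limit of interior
  points of P_d(K): adding s (1 + |x - p|^2)^(d/2), s > 0, makes it coercive.\<close>
lemma nonneg_islimpt_intPd:
  fixes e f :: "('n::finite \<Rightarrow> nat) \<Rightarrow> real"
  assumes "even d" "e \<in> polyspace d" "\<And>x. (1 + sqdist p x) ^ (d div 2) \<le> peval d e x"
    and "f \<in> polyspace d" "\<And>x. 0 \<le> peval d f x"
  shows "f islimpt intPd d K"
proof -
  define \<gamma> where "\<gamma> s = (\<lambda>\<alpha>. 1 * f \<alpha> + s * e \<alpha>)" for s :: real
  have interior: "\<gamma> s \<in> intPd d K - {f}" if "s > 0" for s
  proof
    show "\<gamma> s \<in> intPd d K"
    proof (rule intPd_growth[OF assms(1) _ that, of _ p])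
      show "\<gamma> s \<in> polyspace d" using assms(2,4) by (auto simp: \<gamma>_def polyspace_def)
      show "s * (1 + sqdist p x) ^ (d div 2) \<le> peval d (\<gamma> s) x" for x
        unfolding \<gamma>_def peval_lincomb
        using mult_left_mono[OF assms(3)[of x] less_imp_le[OF that]] assms(5)[of x] by simp
    qed
    have "1 \<le> peval d e p" using assms(3)[of p] by (simp add: sqdist_def)
    then have "peval d (\<gamma> s) p \<noteq> peval d f p" unfolding \<gamma>_def peval_lincomb using that by simp
    then show "\<gamma> s \<notin> {f}" by auto
  qed
  have "continuous_on UNIV \<gamma>"
    unfolding \<gamma>_def by (intro continuous_on_coordinatewise_then_product continuous_intros)
  then have "isCont \<gamma> 0" by (simp add: continuous_on_eq_continuous_at)
  moreover have "\<gamma> 0 = f" by (simp add: \<gamma>_def)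
  ultimately have "(\<gamma> \<longlongrightarrow> f) (at 0)" by (metis isCont_def)
  then have "(\<gamma> \<longlongrightarrow> f) (at_right 0)" by (rule tendsto_within_subset) simp
  moreover have "eventually (\<lambda>s. \<gamma> s \<in> intPd d K - {f}) (at_right 0)"
    using eventually_at_right_less[of "0::real"] by eventually_elim (rule interior)
  ultimately have "filterlim \<gamma> (at f within intPd d K) (at_right 0)"
    by (rule filterlim_at_withinI)
  then have "at f within intPd d K \<noteq> bot"
    using trivial_limit_at_right_real by (auto simp: filterlim_def filtermap_bot_iff bot_unique)
  then show ?thesis using trivial_limit_within by blast
qed

section \<open>A polynomial curve meeting the boundary of P_d(K) infinitely often\<close>

text \<open>Small spheres around an interior point of K meet K (move from p along any
  coordinate axis).\<close>
lemma small_spheres_meet: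
  fixes K :: "('n::finite \<Rightarrow> real) set"
  assumes "p \<in> interior K"
  obtains \<delta> where "\<delta> > 0" "\<And>t. 0 \<le> t \<Longrightarrow> t < \<delta>^2 \<Longrightarrow> \<exists>z\<in>K. sqdist p z = t"
proof -
  obtain U where U: "open U" "p \<in> U" "U \<subseteq> K" using assms by (meson interiorE)
  fix i :: 'n
  define e where "e = (\<lambda>j. if j = i then 1 else (0::real))"
  obtain \<delta> where \<delta>: "\<delta> > 0" "\<And>s. \<bar>s\<bar> < \<delta> \<Longrightarrow> (\<lambda>j. p j + s * e j) \<in> U"
    using open_contains_segment[OF U(1,2)] by blast
  show ?thesis
  proof (rule that[OF \<delta>(1)])
    fix t :: real assume t: "0 \<le> t" "t < \<delta>^2"
    have "sqrt t < \<delta>" using t \<delta>(1) real_sqrt_less_mono[of t "\<delta>^2"] by simp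
    then have "(\<lambda>j. p j + sqrt t * e j) \<in> K" using \<delta>(2) t(1) U(3) by auto
    moreover have "sqdist p (\<lambda>j. p j + sqrt t * e j) = t"
      unfolding sqdist_def using t(1) by (subst sum_single_term[where a=i]) (auto simp: e_def)
    ultimately show "\<exists>z\<in>K. sqdist p z = t" by blast
  qed
qed

lemma representable_sqdist: "representable 2 (sqdist p)"
proof -
  have "representable 1 (\<lambda>x. x i + - p i)" for i
    by (intro representable_add representable_var representable_const) simp
  then have "representable (1 * 2) (\<lambda>x. (x i + - p i) ^ 2)" for i
    by (rule representable_power)
  then show ?thesis
    unfolding sqdist_def[abs_def]
    using representable_sum[of UNIV 2 "\<lambda>i x. (x i - p i) ^ 2"] by simp
qed

lemma quadratic_family:
  fixes p :: "'n::finite \<Rightarrow> real"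
  assumes "even d" "4 \<le> d"
  obtains c where "\<And>t. c t \<in> polyspace d" "poly_curve c"
    "\<And>t x. peval d (c t) x = (sqdist p x - t)^2 * (1 + sqdist p x) ^ (d div 2 - 2)"
proof -
  define W where "W x = (1 + sqdist p x) ^ (d div 2 - 2)" for x
  have d: "d = 4 + 2 * (d div 2 - 2)" using assms by (auto elim!: evenE)
  have RW: "representable (2 * (d div 2 - 2)) W"
    unfolding W_def by (intro representable_power representable_add representable_const
        representable_sqdist)
  have "representable (2 * 2 + 2 * (d div 2 - 2)) (\<lambda>x. sqdist p x ^ 2 * W x)"
    by (intro representable_mult representable_power representable_sqdist RW)
  then obtain a where a: "a \<in> polyspace d" "\<And>x. peval d a x = sqdist p x ^ 2 * W x"
    using d unfolding representable_def by auto
  have "representable (2 + 2 * (d div 2 - 2)) (\<lambda>x. sqdist p x * W x)"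
    by (intro representable_mult representable_sqdist RW)
  then have "representable d (\<lambda>x. sqdist p x * W x)"
    by (rule representable_mono) (use d in linarith)
  then obtain b where b: "b \<in> polyspace d" "\<And>x. peval d b x = sqdist p x * W x"
    unfolding representable_def by auto
  obtain w where w: "w \<in> polyspace d" "\<And>x. peval d w x = W x"
    using representable_mono[OF RW, of d] d unfolding representable_def by fastforce
  define c where "c t = (\<lambda>\<alpha>. a \<alpha> + (- 2 * t) * b \<alpha> + t * t * w \<alpha>)" for t
  show ?thesis
  proof (rule that)
    show "c t \<in> polyspace d" for t using a(1) b(1) w(1) by (simp add: c_def polyspace_def)
    show "poly_curve c" unfolding poly_curve_def c_def
      by (intro allI ispoly_add ispoly_mult ispoly_const ispoly_id)
    fix t x
    have "peval d (c t) x = peval d a x + (- 2 * t) * peval d b x + t * t * peval d w x"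
      unfolding c_def peval_mon by (simp add: distrib_right left_diff_distrib sum.distrib sum_subtractf
            sum_negf sum_distrib_left mult.assoc)
    also have "\<dots> = (sqdist p x - t)^2 * W x"
      unfolding a(2) b(2) w(2) by (simp add: power2_eq_square algebra_simps)
    finally show "peval d (c t) x = (sqdist p x - t)^2 * (1 + sqdist p x) ^ (d div 2 - 2)"
      by (simp add: W_def)
  qed
qed


definition boundary_curve ::
  "nat \<Rightarrow> ('n::finite \<Rightarrow> real) set \<Rightarrow> (real \<Rightarrow> ('n \<Rightarrow> nat) \<Rightarrow> real) \<Rightarrow> real set \<Rightarrow> real \<Rightarrow> bool"
  where "boundary_curve d K c T t0 \<longleftrightarrow> poly_curve c \<and> infinite T \<and> c t0 \<in> intPd d K \<and>
    (\<forall>t\<in>T. c t \<in> Pd d K \<and> c t \<in> bdPd d K \<and> c t islimpt intPd d K)"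

lemma boundary_curve_exists:
  fixes K :: "('n::finite \<Rightarrow> real) set"
  assumes "interior K \<noteq> {}" "even d" "2 < d"
  obtains c T t0 where "boundary_curve d K c T t0"
proof -
  obtain p where p: "p \<in> interior K" using assms(1) by blast
  obtain \<delta> where \<delta>: "\<delta> > 0" "\<And>t. 0 \<le> t \<Longrightarrow> t < \<delta>^2 \<Longrightarrow> \<exists>z\<in>K. sqdist p z = t"
    using small_spheres_meet[OF p] by blast
  have d4: "4 \<le> d" using assms(2,3) by (auto elim!: evenE)
  obtain c where c: "\<And>t. c t \<in> polyspace d" "poly_curve c"
    "\<And>t x. peval d (c t) x = (sqdist p x - t)^2 * (1 + sqdist p x) ^ (d div 2 - 2)"
    using quadratic_family[OF assms(2) d4, of p] by blast
  have nonneg: "0 \<le> peval d (c t) x" for t x by (simp add: c(3) sqdist_nonneg)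
  have unit: "peval d (c (-1)) x = (1 + sqdist p x) ^ (d div 2)" for x
  proof -
    have "peval d (c (-1)) x = (1 + sqdist p x) ^ (2 + (d div 2 - 2))"
      unfolding c(3) power_add by (simp add: add.commute)
    also have "2 + (d div 2 - 2) = d div 2" using d4 by simp
    finally show ?thesis .
  qed
  have "c (-1) \<in> intPd d K"
    by (rule intPd_growth[OF assms(2) c(1), of 1 p]) (simp_all add: unit)
  moreover have "c t \<in> Pd d K \<and> c t \<in> bdPd d K \<and> c t islimpt intPd d K"
    if t: "t \<in> {0<..<\<delta>^2}" for t
  proof (intro conjI)
    show Pd: "c t \<in> Pd d K" using c(1) nonneg by (simp add: Pd_def)
    obtain z where "z \<in> K" "sqdist p z = t" using \<delta>(2)[of t] t by auto
    then show "c t \<in> bdPd d K" by (intro bdPd_crit[OF Pd, of z]) (simp_all add: c(3))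
    show "c t islimpt intPd d K"
      by (rule nonneg_islimpt_intPd[OF assms(2) c(1)[of "-1"] _ c(1) nonneg, of p])
        (simp add: unit)
  qed
  moreover have "infinite {0<..<\<delta>^2}" using \<delta>(1) by simp
  ultimately have "boundary_curve d K c {0<..<\<delta>^2} (-1)"
    using c(2) unfolding boundary_curve_def by simp
  then show ?thesis by (rule that)
qed

lemma boundary_curve_vanishing:
  assumes "boundary_curve d K c T t0" "ispoly (\<lambda>t. \<psi> (c t))" "\<And>t. t \<in> T \<Longrightarrow> \<psi> (c t) = 0"
  shows "\<psi> (c t0) = 0"
proof -
  have "infinite T" using assms(1) by (simp add: boundary_curve_def)
  then show ?thesis by (rule ispoly_zero_on_infinite[OF assms(2) _ assms(3)])
qed

lemma no_defining_polynomial: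
  assumes "boundary_curve d K c T t0"
  shows "\<not> (\<exists>\<phi>. poly_fun \<phi> \<and> (\<forall>f\<in>intPd d K. 0 < \<phi> f) \<and> (\<forall>f\<in>bdPd d K. \<phi> f = 0))"
proof (intro notI, elim exE conjE)
  fix \<phi> assume \<phi>: "poly_fun \<phi>" "\<forall>f\<in>intPd d K. 0 < \<phi> f" "\<forall>f\<in>bdPd d K. \<phi> f = 0"
  have "\<phi> (c t0) = 0"
  proof (rule boundary_curve_vanishing[OF assms])
    show "ispoly (\<lambda>t. \<phi> (c t))"
      using assms unfolding boundary_curve_def by (blast intro: poly_fun_along_curve[OF \<phi>(1)])
    show "\<phi> (c t) = 0" if "t \<in> T" for t
      using assms that \<phi>(3) by (simp add: boundary_curve_def)
  qed
  moreover have "c t0 \<in> intPd d K" using assms by (simp add: boundary_curve_def)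
  ultimately show False using \<phi>(2) by force
qed

lemma log_barrier_vanishes:
  fixes \<phi> :: "'a::t2_space \<Rightarrow> real"
  assumes "continuous (at f within S) \<phi>" "f islimpt S" "\<forall>g\<in>S. 0 < \<phi> g"
    and "filterlim (\<lambda>g. - ln (\<phi> g)) at_top (at f within S)"
  shows "\<phi> f = 0"
proof -
  have F: "at f within S \<noteq> bot" using assms(2) trivial_limit_within by blast
  have lim: "(\<phi> \<longlongrightarrow> \<phi> f) (at f within S)" using assms(1) continuous_within by blast
  have "eventually (\<lambda>g. 0 \<le> \<phi> g) (at f within S)"
    using assms(3) by (auto simp: eventually_at_filter less_imp_le)
  then have "0 \<le> \<phi> f" using tendsto_lowerbound[OF lim _ F] by blast
  moreover have "\<not> 0 < \<phi> f"
  proof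
    assume "0 < \<phi> f"
    then have "((\<lambda>g. - ln (\<phi> g)) \<longlongrightarrow> - ln (\<phi> f)) (at f within S)"
      by (intro tendsto_intros lim) simp
    then show False
      using not_tendsto_and_filterlim_at_infinity[OF F]
        filterlim_at_top_imp_at_infinity[OF assms(4)] by blast
  qed
  ultimately show ?thesis by simp
qed

text \<open>Second claim: -log \<phi> is never a barrier for a polynomial \<phi>, since such a \<phi>
  would vanish on the boundary points of the curve.\<close>
lemma no_polynomial_barrier:
  assumes "boundary_curve d K c T t0"
  shows "\<not> (\<exists>\<phi>. poly_fun \<phi> \<and> (\<forall>f\<in>intPd d K. 0 < \<phi> f) \<and>
              (\<forall>f\<in>bdPd d K. filterlim (\<lambda>g. - ln (\<phi> g)) at_top (at f within intPd d K)))"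
proof (intro notI, elim exE conjE)
  fix \<phi> assume \<phi>: "poly_fun \<phi>" "\<forall>f\<in>intPd d K. 0 < \<phi> f"
    "\<forall>f\<in>bdPd d K. filterlim (\<lambda>g. - ln (\<phi> g)) at_top (at f within intPd d K)"
  have "\<phi> (c t) = 0" if "t \<in> T" for t
  proof (rule log_barrier_vanishes[OF _ _ \<phi>(2)])
    have "isCont \<phi> (c t)"
      using poly_fun_continuous[OF \<phi>(1)] by (simp add: continuous_on_eq_continuous_at)
    then show "continuous (at (c t) within intPd d K) \<phi>"
      by (rule continuous_at_imp_continuous_at_within)
    show "c t islimpt intPd d K"
      using assms that by (simp add: boundary_curve_def)
    have "c t \<in> bdPd d K" using assms that by (simp add: boundary_curve_def)
    then show "filterlim (\<lambda>g. - ln (\<phi> g)) at_top (at (c t) within intPd d K)"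
      using \<phi>(3) by blast
  qed
  moreover have "ispoly (\<lambda>t. \<phi> (c t))"
    using assms unfolding boundary_curve_def by (blast intro: poly_fun_along_curve[OF \<phi>(1)])
  ultimately have "\<phi> (c t0) = 0" by (rule boundary_curve_vanishing[OF assms, rotated])
  moreover have "c t0 \<in> intPd d K" using assms by (simp add: boundary_curve_def)
  ultimately show False using \<phi>(2) by force
qed


section \<open>No LMI representation\<close>

lemma nonneg_quadratic_linear_coeff:
  fixes a b :: real
  assumes "\<And>s. 0 \<le> 2 * s * a + s^2 * b"
  shows "a = 0"
proof -
  have b: "0 \<le> b" using assms[of 1] assms[of "-1"] by simp
  define s where "s = - a / (b + 1)"
  have sb: "s * (b + 1) = - a" using b by (simp add: s_def)
  have "0 \<le> (b + 1)^2 * (2 * s * a + s^2 * b)" using assms[of s] by simp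
  also have "\<dots> = 2 * (s * (b + 1)) * a * (b + 1) + (s * (b + 1))^2 * b"
    by (simp add: power2_eq_square algebra_simps)
  also have "\<dots> = - (a^2 * (b + 2))"
    unfolding sb by (simp add: power2_eq_square algebra_simps)
  finally have "a^2 * (b + 2) \<le> 0" by simp
  then show ?thesis using b by (simp add: mult_le_0_iff)
qed

lemma symmetric_quadratic_form:
  fixes M :: "real^'m::finite^'m"
  assumes "transpose M = M"
  shows "u \<bullet> (M *v w) = w \<bullet> (M *v u)"
proof -
  have "u \<bullet> (M *v w) = (u v* M) \<bullet> w" by (simp add: dot_lmul_matrix)
  also have "u v* M = M *v u" by (metis assms vector_transpose_matrix)
  finally show ?thesis by (simp add: inner_commute)
qed

lemma psd_isotropic_kernel:
  fixes M :: "real^'m::finite^'m"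
  assumes "transpose M = M" "psd_mat M" "v \<bullet> (M *v v) = 0"
  shows "M *v v = 0"
proof -
  define w where "w = M *v v"
  have "0 \<le> 2 * s * (w \<bullet> w) + s^2 * (w \<bullet> (M *v w))" for s
  proof -
    have "0 \<le> (v + s *\<^sub>R w) \<bullet> (M *v (v + s *\<^sub>R w))"
      using assms(2) unfolding psd_mat_def by blast
    also have "\<dots> = v \<bullet> (M *v v) + s * (v \<bullet> (M *v w)) + s * (w \<bullet> (M *v v)) + s^2 * (w \<bullet> (M *v w))"
      by (simp add: matrix_vector_right_distrib matrix_vector_mult_scaleR inner_add_left
          inner_add_right power2_eq_square algebra_simps)
    also have "\<dots> = 2 * s * (w \<bullet> w) + s^2 * (w \<bullet> (M *v w))"
      using assms(3) symmetric_quadratic_form[OF assms(1), of v w] by (simp add: w_def)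
    finally show ?thesis .
  qed
  then have "w \<bullet> w = 0" by (rule nonneg_quadratic_linear_coeff)
  then show ?thesis by (simp add: w_def)
qed

lemma det_eq_0_iff_kernel:
  fixes M :: "real^'m::finite^'m"
  shows "det M = 0 \<longleftrightarrow> (\<exists>v. v \<noteq> 0 \<and> M *v v = 0)"
proof -
  have "det M \<noteq> 0 \<longleftrightarrow> (\<forall>v. M *v v = 0 \<longrightarrow> v = 0)"
    by (metis invertible_det_nz invertible_def matrix_left_invertible_ker matrix_left_right_inverse)
  then show ?thesis by blast
qed

lemma psd_not_pd_singular:
  fixes M :: "real^'m::finite^'m"
  assumes "transpose M = M" "psd_mat M" "\<not> pd_mat M"
  shows "det M = 0"
proof -
  obtain v where v: "v \<noteq> 0" "\<not> 0 < v \<bullet> (M *v v)" using assms(3) unfolding pd_mat_def by blast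
  then have "v \<bullet> (M *v v) = 0" using assms(2) unfolding psd_mat_def by (meson not_less order.antisym)
  then have "M *v v = 0" by (rule psd_isotropic_kernel[OF assms(1,2)])
  then show ?thesis using v(1) det_eq_0_iff_kernel by blast
qed

lemma pd_det_nonzero:
  fixes M :: "real^'m::finite^'m"
  assumes "pd_mat M" shows "det M \<noteq> 0"
  using assms unfolding det_eq_0_iff_kernel pd_mat_def by force

text \<open>Coercivity of a positive definite form: v^T M v \<ge> \<mu> |v|^2 with \<mu> > 0, by
  compactness of the unit sphere.\<close>
lemma pd_coercive:
  fixes M :: "real^'m::finite^'m"
  assumes "pd_mat M"
  obtains \<mu> where "\<mu> > 0" "\<And>v. \<mu> * (norm v)^2 \<le> v \<bullet> (M *v v)"
proof -
  have "continuous_on (sphere 0 1) (\<lambda>v::real^'m. v \<bullet> (M *v v))"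
    by (intro continuous_intros linear_continuous_on matrix_vector_mul_linear)
  then have "\<exists>u0\<in>sphere 0 1. \<forall>u\<in>sphere 0 1. u0 \<bullet> (M *v u0) \<le> u \<bullet> (M *v u)"
    by (intro continuous_attains_inf compact_sphere) simp_all
  then obtain u0 where u0: "u0 \<in> sphere 0 1"
    "\<And>u. u \<in> sphere 0 1 \<Longrightarrow> u0 \<bullet> (M *v u0) \<le> u \<bullet> (M *v u)"
    by blast
  have "u0 \<noteq> 0" using u0(1) by auto
  then have "0 < u0 \<bullet> (M *v u0)" using assms unfolding pd_mat_def by blast
  moreover have "(u0 \<bullet> (M *v u0)) * (norm v)^2 \<le> v \<bullet> (M *v v)" for v
  proof (cases "v = 0")
    case False
    define u where "u = (1 / norm v) *\<^sub>R v"
    have u: "u \<in> sphere 0 1" and vu: "v = norm v *\<^sub>R u" using False by (simp_all add: u_def)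
    have "v \<bullet> (M *v v) = (norm v)^2 * (u \<bullet> (M *v u))"
      by (subst (1 2) vu) (simp add: matrix_vector_mult_scaleR power2_eq_square)
    also have "\<dots> \<ge> (norm v)^2 * (u0 \<bullet> (M *v u0))" using u0(2)[OF u] by (intro mult_left_mono) auto
    finally show ?thesis by (simp add: mult.commute)
  qed simp
  ultimately show ?thesis using that by blast
qed

lemma quadratic_form_bound:
  fixes M :: "real^'m::finite^'m"
  shows "\<exists>C\<ge>0. \<forall>v. \<bar>v \<bullet> (M *v v)\<bar> \<le> C * (norm v)^2"
proof -
  obtain C where C: "C \<ge> 0" "\<And>v. norm (M *v v) \<le> norm v * C"
    using bounded_linear.nonneg_bounded[OF matrix_vector_mul_bounded_linear] by blast
  have "\<bar>v \<bullet> (M *v v)\<bar> \<le> C * (norm v)^2" for v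
  proof -
    have "\<bar>v \<bullet> (M *v v)\<bar> \<le> norm v * norm (M *v v)" by (rule Cauchy_Schwarz_ineq2)
    also have "\<dots> \<le> norm v * (norm v * C)" using C(2) by (intro mult_left_mono) auto
    finally show ?thesis by (simp add: power2_eq_square mult_ac)
  qed
  then show ?thesis using C(1) by blast
qed

definition pencil :: "nat \<Rightarrow> real^'m::finite^'m \<Rightarrow> (('n::finite \<Rightarrow> nat) \<Rightarrow> real^'m^'m)
    \<Rightarrow> (('n \<Rightarrow> nat) \<Rightarrow> real) \<Rightarrow> real^'m^'m" where
  "pencil d A0 A f = A0 + (\<Sum>\<alpha>\<in>mons_le d. f \<alpha> *\<^sub>R A \<alpha>)"

lemma pencil_quadratic_form:
  "v \<bullet> (pencil d A0 A f *v v) = v \<bullet> (A0 *v v) + (\<Sum>\<alpha>\<in>mons_le d. f \<alpha> * (v \<bullet> (A \<alpha> *v v)))"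
proof -
  have "(\<Sum>\<alpha>\<in>S. f \<alpha> *\<^sub>R A \<alpha>) *v v = (\<Sum>\<alpha>\<in>S. f \<alpha> *\<^sub>R (A \<alpha> *v v))" for S
    by (induction S rule: infinite_finite_induct)
       (simp_all add: matrix_vector_mult_add_rdistrib scaleR_matrix_vector_assoc)
  then show ?thesis
    by (simp add: pencil_def matrix_vector_mult_add_rdistrib inner_add_right inner_sum_right)
qed

lemma pencil_entry: "pencil d A0 A f $ i $ j = A0 $ i $ j + (\<Sum>\<alpha>\<in>mons_le d. f \<alpha> * A \<alpha> $ i $ j)"
  by (simp add: pencil_def sum_component)

lemma transpose_entry: "transpose M $ i $ j = M $ j $ i"
  by (simp add: transpose_def)

lemma pencil_symmetric:
  assumes "transpose A0 = A0" "\<forall>\<alpha>\<in>mons_le d. transpose (A \<alpha>) = A \<alpha>"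
  shows "transpose (pencil d A0 A f) = pencil d A0 A f"
proof -
  have "A0 $ j $ i = A0 $ i $ j" for i j using assms(1) by (metis transpose_entry)
  moreover have "A \<alpha> $ j $ i = A \<alpha> $ i $ j" if "\<alpha> \<in> mons_le d" for i j \<alpha>
    using assms(2) that by (metis transpose_entry)
  ultimately show ?thesis
    unfolding vec_eq_iff transpose_entry pencil_entry by (auto intro!: sum.cong)
qed

lemma det_pencil_along_curve:
  assumes "poly_curve c"
  shows "ispoly (\<lambda>t. det (pencil d A0 A (c t)))"
  using assms unfolding poly_curve_def
  by (intro ispoly_det, unfold pencil_entry) (intro ispoly_add ispoly_sum ispoly_mult ispoly_const; simp)

text \<open>If P_d(K) is cut out by the pencil, positive definiteness of the pencil at f forces
  f into the interior: a small perturbation of f perturbs the form by at most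
  a small multiple of |v|^2.\<close>
lemma pencil_pd_interior:
  assumes LMI: "Pd d K = {f \<in> polyspace d. psd_mat (pencil d A0 A f)}"
    and f: "f \<in> polyspace d" "pd_mat (pencil d A0 A f)"
  shows "f \<in> intPd d K"
proof -
  obtain \<mu> where \<mu>: "\<mu> > 0" "\<And>v. \<mu> * (norm v)^2 \<le> v \<bullet> (pencil d A0 A f *v v)"
    using pd_coercive[OF f(2)] by blast
  have "\<forall>\<alpha>. \<exists>C\<ge>0. \<forall>v. \<bar>v \<bullet> (A \<alpha> *v v)\<bar> \<le> C * (norm v)^2"
    using quadratic_form_bound by blast
  then obtain C where C: "\<And>\<alpha>. C \<alpha> \<ge> 0" "\<And>\<alpha> v. \<bar>v \<bullet> (A \<alpha> *v v)\<bar> \<le> C \<alpha> * (norm v)^2"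
    by metis
  define Ct where "Ct = (\<Sum>\<alpha>\<in>mons_le d. C \<alpha>)"
  have Ct: "0 \<le> Ct" unfolding Ct_def using C(1) by (intro sum_nonneg) auto
  define \<epsilon> where "\<epsilon> = \<mu> / (Ct + 1)"
  have \<epsilon>: "\<epsilon> > 0" "\<epsilon> * Ct \<le> \<mu>"
    using \<mu>(1) Ct by (simp_all add: \<epsilon>_def divide_le_eq)
  show ?thesis
  proof (rule intPd_crit[OF f(1) \<epsilon>(1)])
    fix g assume g: "g \<in> polyspace d" "\<forall>\<alpha>\<in>mons_le d. \<bar>g \<alpha> - f \<alpha>\<bar> < \<epsilon>"
    have "0 \<le> v \<bullet> (pencil d A0 A g *v v)" for v
    proof -
      let ?E = "\<Sum>\<alpha>\<in>mons_le d. (g \<alpha> - f \<alpha>) * (v \<bullet> (A \<alpha> *v v))"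
      have "v \<bullet> (pencil d A0 A g *v v) = v \<bullet> (pencil d A0 A f *v v) + ?E"
        unfolding pencil_quadratic_form by (simp add: sum.distrib[symmetric] algebra_simps)
      moreover have "\<bar>?E\<bar> \<le> \<mu> * (norm v)^2"
      proof -
        have "\<bar>?E\<bar> \<le> (\<Sum>\<alpha>\<in>mons_le d. \<bar>(g \<alpha> - f \<alpha>) * (v \<bullet> (A \<alpha> *v v))\<bar>)" by (rule sum_abs)
        also have "\<dots> \<le> (\<Sum>\<alpha>\<in>mons_le d. \<epsilon> * (C \<alpha> * (norm v)^2))"
          unfolding abs_mult using g(2) C(2) by (intro sum_mono mult_mono) auto
        also have "\<dots> = \<epsilon> * Ct * (norm v)^2"
          by (simp add: Ct_def sum_distrib_left sum_distrib_right mult_ac)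
        also have "\<dots> \<le> \<mu> * (norm v)^2" using \<epsilon>(2) by (intro mult_right_mono) auto
        finally show ?thesis .
      qed
      ultimately show ?thesis using \<mu>(2)[of v] by linarith
    qed
    then show "g \<in> Pd d K" using g(1) LMI unfolding psd_mat_def by auto
  qed
qed


text \<open>Third claim: for an LMI description, det of the pencil would be a polynomial along
  the curve that vanishes at the boundary points but not at the interior point.\<close>
lemma no_lmi_representation:
  assumes "boundary_curve d K c T t0"
  shows "\<not> (\<exists>(A0 :: real^'m::finite^'m) A. transpose A0 = A0 \<and> (\<forall>\<alpha>\<in>mons_le d. transpose (A \<alpha>) = A \<alpha>) \<and>
              Pd d K = {f \<in> polyspace d. psd_mat (pencil d A0 A f)} \<and>
              (\<forall>f\<in>intPd d K. pd_mat (pencil d A0 A f)))"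
proof (intro notI, elim exE conjE)
  fix A0 :: "real^'m^'m" and A
  assume sym: "transpose A0 = A0" "\<forall>\<alpha>\<in>mons_le d. transpose (A \<alpha>) = A \<alpha>"
    and LMI: "Pd d K = {f \<in> polyspace d. psd_mat (pencil d A0 A f)}"
    and pd: "\<forall>f\<in>intPd d K. pd_mat (pencil d A0 A f)"
  have "ispoly (\<lambda>t. det (pencil d A0 A (c t)))"
    using assms unfolding boundary_curve_def by (blast intro: det_pencil_along_curve)
  moreover have "det (pencil d A0 A (c t)) = 0" if t: "t \<in> T" for t
  proof (rule psd_not_pd_singular[OF pencil_symmetric[OF sym]])
    have Pd: "c t \<in> Pd d K" and bd: "c t \<in> bdPd d K"
      using assms t by (simp_all add: boundary_curve_def)
    then show "psd_mat (pencil d A0 A (c t))" using LMI by blast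
    have "c t \<notin> intPd d K" using bd unfolding bdPd_def intPd_def frontier_of_def by blast
    then show "\<not> pd_mat (pencil d A0 A (c t))"
      using pencil_pd_interior[OF LMI] Pd LMI by blast
  qed
  ultimately have "det (pencil d A0 A (c t0)) = 0" by (rule boundary_curve_vanishing[OF assms])
  moreover have "c t0 \<in> intPd d K" using assms by (simp add: boundary_curve_def)
  ultimately show False using pd pd_det_nonzero by blast
qed

theorem mainTheorem14:
  fixes K :: "('n::finite \<Rightarrow> real) set" and d :: nat
  assumes "semialgebraic K" and "interior K \<noteq> {}"
    and "even d" and "d > 2"
  shows "\<not> (\<exists>\<phi>. poly_fun \<phi> \<and> (\<forall>f\<in>intPd d K. 0 < \<phi> f) \<and> (\<forall>f\<in>bdPd d K. \<phi> f = 0))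
    \<and> \<not> (\<exists>\<phi>. poly_fun \<phi> \<and> (\<forall>f\<in>intPd d K. 0 < \<phi> f) \<and>
              (\<forall>f\<in>bdPd d K. filterlim (\<lambda>g. - ln (\<phi> g)) at_top (at f within intPd d K)))
    \<and> \<not> (\<exists>(A0 :: real^'m::finite^'m) A.
              transpose A0 = A0 \<and> (\<forall>\<alpha>\<in>mons_le d. transpose (A \<alpha>) = A \<alpha>) \<and>
              Pd d K = {f \<in> polyspace d. psd_mat (A0 + (\<Sum>\<alpha>\<in>mons_le d. f \<alpha> *\<^sub>R A \<alpha>))} \<and>
              (\<forall>f\<in>intPd d K. pd_mat (A0 + (\<Sum>\<alpha>\<in>mons_le d. f \<alpha> *\<^sub>R A \<alpha>))))"
proof -
  obtain c T t0 where curve: "boundary_curve d K c T t0"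
    using boundary_curve_exists[OF assms(2-4)] by blast
  show ?thesis
    using no_defining_polynomial[OF curve] no_polynomial_barrier[OF curve]
      no_lmi_representation[OF curve, where 'm='m]
    unfolding pencil_def by blast
qed

end
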